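(* Let $R$ be any unital ring, let $\mathcal{F}$ be any Gabriel filter of right ideals of $R$, and let $\Delta=\{\delta_n\}_{n\in\omega}$ be any higher derivation on $R$. Then for every $I\in\mathcal{F}$ and every $n\in\omega$ there is $J\in\mathcal{F}$ with $\delta_i(J)\subseteq I$ for all $i\le n$. (That is, every Gabriel filter is higher differential; equivalently every hereditary torsion theory is higher differential.)
   Context: For a right ideal $I$ and $r\in R$, write $(r:I)=\{s\in R\mid rs\in I\}$. A Gabriel filter on $R$ is a nonempty collection $\mathcal{F}$ of right ideals of $R$ such that (1) if $I\in\mathcal{F}$ and $r\in R$ then $(r:I)\in\mathcal{F}$; (2) if $I\in\mathcal{F}$ and $J$ is a right ideal with $(r:J)\in\mathcal{F}$ for all $r\in I$, then $J\in\mathcal{F}$. Gabriel filters correspond bijectively to hereditary torsion theories on right $R$-modules. A higher derivation on $R$ is a family $\{\delta_n\}_{n\in\omega}$ of additive maps $R\to R$ with $\delta_0=\mathrm{id}_R$ and $\delta_n(rs)=\sum_{i=0}^n\delta_i(r)\delta_{n-i}(s)$ for all $n$ and all $r,s\in R$. *)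

theory Defs
  imports Main
begin

definition right_ideal :: "'a::ring_1 set \<Rightarrow> bool" where
  "right_ideal I \<longleftrightarrow> 0 \<in> I \<and> (\<forall>a\<in>I. \<forall>b\<in>I. a + b \<in> I) \<and> (\<forall>a\<in>I. - a \<in> I)
     \<and> (\<forall>a\<in>I. \<forall>r. a * r \<in> I)"

definition colon :: "'a::ring_1 \<Rightarrow> 'a set \<Rightarrow> 'a set" where
  "colon r I = {s. r * s \<in> I}"

definition gabriel_filter :: "'a::ring_1 set set \<Rightarrow> bool" where
  "gabriel_filter F \<longleftrightarrow> F \<noteq> {} \<and> (\<forall>I\<in>F. right_ideal I)
     \<and> (\<forall>I\<in>F. \<forall>r. colon r I \<in> F)
     \<and> (\<forall>I\<in>F. \<forall>J. right_ideal J \<and> (\<forall>r\<in>I. colon r J \<in> F) \<longrightarrow> J \<in> F)"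

definition higher_derivation :: "(nat \<Rightarrow> 'a::ring_1 \<Rightarrow> 'a) \<Rightarrow> bool" where
  "higher_derivation \<delta> \<longleftrightarrow> (\<forall>n x y. \<delta> n (x + y) = \<delta> n x + \<delta> n y)
     \<and> \<delta> 0 = id
     \<and> (\<forall>n r s. \<delta> n (r * s) = (\<Sum>i\<le>n. \<delta> i r * \<delta> (n - i) s))"

end

theory Submission
  imports Defs
begin

text \<open>For I in F let J n I (here higher_core \<delta> n I) be the right ideal of all a with
  \<delta> i (a R) \<subseteq> I for all i \<le> n; it suffices that J n I \<in> F, shown by induction on n. For r \<in> I
  the Leibniz rule gives \<delta> i (r s t) = r \<delta> i (s t) + (\<Sum>1 \<le> k \<le> i. \<delta> k r \<delta> (i - k) (s t)), so
  (r : J (n+1) I) contains the finite intersection of the ideals J n (\<delta> k r : I), 1 \<le> k \<le> n+1,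
  which lie in F by induction; the second Gabriel axiom then yields J (n+1) I \<in> F.\<close>

lemma higher_derivation_add:
  "higher_derivation \<delta> \<Longrightarrow> \<delta> n (x + y) = \<delta> n x + \<delta> n y"
  unfolding higher_derivation_def by blast

lemma higher_derivation_0:
  "higher_derivation \<delta> \<Longrightarrow> \<delta> 0 x = x"
  unfolding higher_derivation_def by simp

lemma higher_derivation_mult:
  "higher_derivation \<delta> \<Longrightarrow> \<delta> n (r * s) = (\<Sum>i\<le>n. \<delta> i r * \<delta> (n - i) s)"
  unfolding higher_derivation_def by blast

lemma higher_derivation_zero:
  assumes "higher_derivation \<delta>"
  shows "\<delta> n 0 = 0"
  using higher_derivation_add[OF assms, of n 0 0] by simp

lemma higher_derivation_minus:
  assumes "higher_derivation \<delta>"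
  shows "\<delta> n (- x) = - \<delta> n x"
  using higher_derivation_add[OF assms, of n x "- x"]
  by (simp add: higher_derivation_zero[OF assms] eq_neg_iff_add_eq_0 add.commute)

lemma right_ideal_sum:
  assumes "right_ideal I" and "\<And>k. k \<in> A \<Longrightarrow> f k \<in> I"
  shows "sum f A \<in> I"
  using assms(2)
proof (induction A rule: infinite_finite_induct)
  case (insert x A)
  then show ?case using assms(1) unfolding right_ideal_def by simp
qed (use assms(1) in \<open>auto simp: right_ideal_def\<close>)

lemma right_ideal_Int:
  "right_ideal I \<Longrightarrow> right_ideal J \<Longrightarrow> right_ideal (I \<inter> J)"
  unfolding right_ideal_def by auto

lemma right_ideal_colon:
  "right_ideal I \<Longrightarrow> right_ideal (colon r I)"
  unfolding right_ideal_def colon_def by (auto simp: distrib_left mult.assoc[symmetric])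

lemma colon_mem_eq_UNIV:
  "right_ideal I \<Longrightarrow> r \<in> I \<Longrightarrow> colon r I = UNIV"
  unfolding right_ideal_def colon_def by auto

lemma colon_Int_eq:
  "right_ideal I \<Longrightarrow> r \<in> I \<Longrightarrow> colon r (I \<inter> J) = colon r J"
  unfolding right_ideal_def colon_def by auto

context
  fixes F :: "'a::ring_1 set set"
  assumes F: "gabriel_filter F"
begin

lemma gabriel_filter_nonempty: "F \<noteq> {}"
  using F unfolding gabriel_filter_def by (elim conjE)

lemma gabriel_filter_right_ideal: "I \<in> F \<Longrightarrow> right_ideal I"
  using F unfolding gabriel_filter_def by (elim conjE) (erule bspec)

lemma gabriel_filter_colon: "I \<in> F \<Longrightarrow> colon r I \<in> F"
  using F unfolding gabriel_filter_def by (elim conjE) (drule bspec, assumption, erule spec)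

lemma gabriel_filter_local:
  assumes "I \<in> F" and "right_ideal J" and "\<And>r. r \<in> I \<Longrightarrow> colon r J \<in> F"
  shows "J \<in> F"
proof -
  have "\<forall>I\<in>F. \<forall>J. right_ideal J \<and> (\<forall>r\<in>I. colon r J \<in> F) \<longrightarrow> J \<in> F"
    using F unfolding gabriel_filter_def by (elim conjE)
  with assms show ?thesis by blast
qed

lemma gabriel_filter_UNIV: "UNIV \<in> F"
proof -
  obtain I where I: "I \<in> F"
    using gabriel_filter_nonempty by blast
  have "right_ideal I"
    using I by (rule gabriel_filter_right_ideal)
  then have "colon 0 I = UNIV"
    by (simp add: colon_mem_eq_UNIV right_ideal_def)
  with gabriel_filter_colon[OF I, of 0] show ?thesis by simp
qed

lemma gabriel_filter_upward:
  assumes "I \<in> F" "I \<subseteq> J" "right_ideal J"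
  shows "J \<in> F"
proof (rule gabriel_filter_local[OF assms(1,3)])
  fix r assume "r \<in> I"
  with assms have "colon r J = UNIV"
    using colon_mem_eq_UNIV by blast
  then show "colon r J \<in> F"
    using gabriel_filter_UNIV by simp
qed

lemma gabriel_filter_Int:
  assumes I: "I \<in> F" and K: "K \<in> F"
  shows "I \<inter> K \<in> F"
proof (rule gabriel_filter_local[OF I])
  show "right_ideal (I \<inter> K)"
    using I K by (simp add: right_ideal_Int gabriel_filter_right_ideal)
  fix r assume "r \<in> I"
  then show "colon r (I \<inter> K) \<in> F"
    using I K by (simp add: colon_Int_eq gabriel_filter_right_ideal gabriel_filter_colon)
qed

lemma gabriel_filter_INT:
  assumes "finite A" and "\<And>k. k \<in> A \<Longrightarrow> G k \<in> F"
  shows "(\<Inter>k\<in>A. G k) \<in> F"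
  using assms
  by (induction A rule: finite_induct) (simp_all add: gabriel_filter_UNIV gabriel_filter_Int)

end

definition higher_core :: "(nat \<Rightarrow> 'a::ring_1 \<Rightarrow> 'a) \<Rightarrow> nat \<Rightarrow> 'a set \<Rightarrow> 'a set" where
  "higher_core \<delta> n I = {a. \<forall>i\<le>n. \<forall>t. \<delta> i (a * t) \<in> I}"

context
  fixes \<delta> :: "nat \<Rightarrow> 'a::ring_1 \<Rightarrow> 'a"
  assumes \<delta>: "higher_derivation \<delta>"
begin

lemma right_ideal_higher_core:
  "right_ideal I \<Longrightarrow> right_ideal (higher_core \<delta> n I)"
  unfolding right_ideal_def higher_core_def
  by (auto simp: higher_derivation_zero[OF \<delta>] higher_derivation_minus[OF \<delta>]
      higher_derivation_add[OF \<delta>] distrib_right mult.assoc)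

lemma higher_core_image_subset:
  "i \<le> n \<Longrightarrow> \<delta> i ` higher_core \<delta> n I \<subseteq> I"
proof
  fix y assume "i \<le> n" and "y \<in> \<delta> i ` higher_core \<delta> n I"
  then obtain a where "\<delta> i (a * 1) \<in> I" and "y = \<delta> i a"
    unfolding higher_core_def by blast
  then show "y \<in> I" by simp
qed

lemma higher_core_0:
  "right_ideal I \<Longrightarrow> higher_core \<delta> 0 I = I"
  unfolding higher_core_def right_ideal_def
  by (auto simp: higher_derivation_0[OF \<delta>] dest: spec[where x = 1])

lemma higher_core_Suc_colon:
  assumes I: "right_ideal I" and r: "r \<in> I"
  shows "(\<Inter>k\<in>{1..Suc n}. higher_core \<delta> n (colon (\<delta> k r) I)) \<subseteq> colon r (higher_core \<delta> (Suc n) I)"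
proof (rule subsetI)
  fix s assume s: "s \<in> (\<Inter>k\<in>{1..Suc n}. higher_core \<delta> n (colon (\<delta> k r) I))"
  have "\<delta> i (r * (s * t)) \<in> I" if i: "i \<le> Suc n" for i t
    unfolding higher_derivation_mult[OF \<delta>, of i r]
  proof (rule right_ideal_sum[OF I])
    fix k assume k: "k \<in> {..i}"
    show "\<delta> k r * \<delta> (i - k) (s * t) \<in> I"
    proof (cases "k = 0")
      case True
      with r I show ?thesis by (simp add: higher_derivation_0[OF \<delta>] right_ideal_def)
    next
      case False
      with k i have "s \<in> higher_core \<delta> n (colon (\<delta> k r) I)" and "i - k \<le> n"
        using s by auto
      then show ?thesis unfolding higher_core_def colon_def by blast
    qed
  qed
  then show "s \<in> colon r (higher_core \<delta> (Suc n) I)"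
    unfolding colon_def higher_core_def by (simp add: mult.assoc)
qed

lemma higher_core_mem:
  assumes F: "gabriel_filter F"
  shows "I \<in> F \<Longrightarrow> higher_core \<delta> n I \<in> F"
proof (induction n arbitrary: I)
  case 0
  then show ?case by (simp add: higher_core_0 gabriel_filter_right_ideal[OF F])
next
  case (Suc n)
  have I: "right_ideal I"
    using Suc.prems gabriel_filter_right_ideal[OF F] by blast
  show ?case
  proof (rule gabriel_filter_local[OF F Suc.prems right_ideal_higher_core[OF I]])
    fix r assume "r \<in> I"
    have "(\<Inter>k\<in>{1..Suc n}. higher_core \<delta> n (colon (\<delta> k r) I)) \<in> F"
      using Suc.IH Suc.prems by (simp add: gabriel_filter_INT[OF F] gabriel_filter_colon[OF F])
    then show "colon r (higher_core \<delta> (Suc n) I) \<in> F"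
      using higher_core_Suc_colon[OF I \<open>r \<in> I\<close>]
      by (rule gabriel_filter_upward[OF F]) (simp add: right_ideal_colon right_ideal_higher_core I)
  qed
qed

end

theorem corollary3p2:
  fixes F :: "'a::ring_1 set set" and \<delta> :: "nat \<Rightarrow> 'a \<Rightarrow> 'a"
  assumes "gabriel_filter F" and "higher_derivation \<delta>"
  shows "\<forall>I\<in>F. \<forall>n. \<exists>J\<in>F. \<forall>i\<le>n. \<delta> i ` J \<subseteq> I"
proof (intro ballI allI)
  fix I n assume "I \<in> F"
  then have "higher_core \<delta> n I \<in> F"
    by (rule higher_core_mem[OF assms(2,1)])
  moreover have "\<forall>i\<le>n. \<delta> i ` higher_core \<delta> n I \<subseteq> I"
    using higher_core_image_subset[OF assms(2)] by simp
  ultimately show "\<exists>J\<in>F. \<forall>i\<le>n. \<delta> i ` J \<subseteq> I" ..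
qed

end
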